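(* Let $R_0>0$, $\alpha\in\big(0,\frac{1}{p'\bar q}\big)$, $\vartheta\in(0,1/2)$, $\lambda_0:=\exp(\exp(\vartheta^{-1/\alpha}))$, and for $r\in(0,R_0]$ let $$\omega(r)=\frac1\vartheta\Big[\frac{1}{\log(\log(\lambda_0R_0/r))}\Big]^\alpha.$$ Define $R_{j+1}:=\exp\big(-\frac\vartheta\alpha[\vartheta\omega(R_j)]^{-1/\alpha}\big)R_j$ for $j\in\mathbb{N}_0$. Then $\omega(R_0)=1$, $$\omega(R_{j+1})\ge\omega(R_j)\Big(1-\vartheta\exp\big(-[\vartheta\omega(R_j)]^{-1/\alpha}\big)\Big)\quad\text{and}\quad\omega(R_j)\le2\omega(R_{j+1})\quad\text{for all }j\in\mathbb{N}_0.$$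
   Context: $p\ge2$, $p'=p/(p-1)$, $n\ge2$, $\bar q:=1+n/p$ if $p<n$ and $\bar q:=2$ if $p\ge n$. *)

theory Defs
  imports Complex_Main
begin

definition conj_exp :: "real \<Rightarrow> real" where
  "conj_exp p = p / (p - 1)"

definition qbar :: "real \<Rightarrow> nat \<Rightarrow> real" where
  "qbar p n = (if p < real n then 1 + real n / p else 2)"

definition lambda0 :: "real \<Rightarrow> real \<Rightarrow> real" where
  "lambda0 \<theta> \<alpha> = exp (exp (\<theta> powr (-1 / \<alpha>)))"

definition omega :: "real \<Rightarrow> real \<Rightarrow> real \<Rightarrow> real \<Rightarrow> real" where
  "omega \<theta> \<alpha> R0 r = (1 / \<theta>) * (1 / ln (ln (lambda0 \<theta> \<alpha> * R0 / r))) powr \<alpha>"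

primrec radii :: "real \<Rightarrow> real \<Rightarrow> real \<Rightarrow> nat \<Rightarrow> real" where
  "radii \<theta> \<alpha> R0 0 = R0"
| "radii \<theta> \<alpha> R0 (Suc j) =
     exp (- (\<theta> / \<alpha>) * (\<theta> * omega \<theta> \<alpha> R0 (radii \<theta> \<alpha> R0 j)) powr (-1 / \<alpha>))
       * radii \<theta> \<alpha> R0 j"

end

theory Submission
  imports Defs
begin

text \<open>Write \<open>x = ln (ln (K/r))\<close>, so that \<open>\<theta> \<omega>(r) = x powr -\<alpha>\<close> and the step \<open>r \<mapsto> r'\<close> adds
  \<open>(\<theta>/\<alpha>) x\<close> to \<open>y = ln (K/r) = exp x\<close>. Hence \<open>x' = ln (y + (\<theta>/\<alpha>) x) \<le> x (1 + (\<theta>/\<alpha>)/y)\<close>,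
  and for \<open>q = x'/x\<close> we get \<open>\<alpha> (q - 1) \<le> \<theta>/y = \<theta> exp (-x)\<close>. Since
  \<open>\<omega>(r') = \<omega>(r) q powr -\<alpha> \<ge> \<omega>(r) exp (-\<alpha> (q - 1)) \<ge> \<omega>(r) (1 - \<theta> exp (-x))\<close> and
  \<open>\<theta> exp (-x) < 1/2\<close>, both estimates follow; they apply at every \<open>R\<^sub>j\<close> because
  \<open>ln (K/R\<^sub>j)\<close> only grows from its initial value \<open>exp (\<theta> powr (-1/\<alpha>)) > 1\<close>.\<close>

definition loglog_modulus :: "real \<Rightarrow> real \<Rightarrow> real \<Rightarrow> real \<Rightarrow> real" where
  "loglog_modulus \<theta> \<alpha> K r = (1 / \<theta>) * (1 / ln (ln (K / r))) powr \<alpha>"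

lemma omega_eq_loglog_modulus: "omega \<theta> \<alpha> R0 = loglog_modulus \<theta> \<alpha> (lambda0 \<theta> \<alpha> * R0)"
  by (simp add: fun_eq_iff omega_def loglog_modulus_def)

lemma loglog_modulus_eq_powr:
  assumes "0 < \<theta>" and "ln (K / r) > 1"
  shows "loglog_modulus \<theta> \<alpha> K r = (1 / \<theta>) * ln (ln (K / r)) powr (-\<alpha>)"
  using assms by (simp add: loglog_modulus_def powr_minus_divide powr_divide)

lemma loglog_modulus_powr_inverse:
  assumes "0 < \<alpha>" and "0 < \<theta>" and "ln (K / r) > 1"
  shows "(\<theta> * loglog_modulus \<theta> \<alpha> K r) powr (-1 / \<alpha>) = ln (ln (K / r))"
  using assms by (simp add: loglog_modulus_eq_powr powr_powr)

lemma ln_add_ln_le: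
  fixes y c :: real
  assumes "y > 1" and "c \<ge> 0"
  shows "ln (y + c * ln y) \<le> ln y * (1 + c / y)"
proof -
  have pos: "1 + c * ln y / y > 0"
    using assms by (simp add: add_pos_nonneg)
  have "y + c * ln y = y * (1 + c * ln y / y)"
    using assms by (simp add: field_simps)
  then have "ln (y + c * ln y) = ln (y * (1 + c * ln y / y))"
    by simp
  also have "\<dots> = ln y + ln (1 + c * ln y / y)"
    using assms pos by (simp add: ln_mult)
  also have "\<dots> \<le> ln y + c * ln y / y"
    using assms by (simp add: ln_add_one_self_le_self)
  finally show ?thesis
    by (simp add: algebra_simps)
qed

lemma powr_neg_ge_one_minus:
  fixes q \<alpha> t :: real
  assumes "q \<ge> 1" and "0 < \<alpha>" and "\<alpha> * (q - 1) \<le> t"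
  shows "q powr (-\<alpha>) \<ge> 1 - t"
proof -
  have "\<alpha> * ln q \<le> t"
    using assms ln_le_minus_one[of q] mult_left_mono[of "ln q" "q - 1" \<alpha>] by linarith
  then have "exp (- t) \<le> q powr (-\<alpha>)"
    using assms by (simp add: powr_def)
  then show ?thesis
    using exp_ge_add_one_self[of "-t"] by linarith
qed

lemma loglog_modulus_step:
  fixes \<alpha> \<theta> K r :: real
  assumes \<alpha>: "0 < \<alpha>" and \<theta>: "0 < \<theta>" "\<theta> < 1/2" and r: "r > 0" and K: "K > 0"
    and ln_Kr: "ln (K / r) > 1"
  defines "W \<equiv> loglog_modulus \<theta> \<alpha> K"
  defines "r' \<equiv> exp (- (\<theta> / \<alpha>) * (\<theta> * W r) powr (-1 / \<alpha>)) * r"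
  shows "r' > 0" and "ln (K / r') \<ge> ln (K / r)"
    and "W r' \<ge> W r * (1 - \<theta> * exp (- ((\<theta> * W r) powr (-1 / \<alpha>))))"
    and "W r \<le> 2 * W r'"
proof -
  define y where "y = ln (K / r)"
  define x where "x = ln y"
  define c where "c = \<theta> / \<alpha>"
  have y_gt: "y > 1" and x_pos: "x > 0" and c_pos: "c > 0"
    using \<alpha> \<theta> ln_Kr by (auto simp: y_def x_def c_def ln_gt_zero)
  have Wx: "(\<theta> * W r) powr (-1 / \<alpha>) = x"
    unfolding W_def x_def y_def using \<alpha> \<theta> ln_Kr by (intro loglog_modulus_powr_inverse)
  have r'_eq: "r' = exp (- (c * x)) * r"
    unfolding r'_def Wx c_def by simp
  show "r' > 0"
    using r'_eq r by simp
  have "K / r' = exp (c * x) * (K / r)"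
    using r by (simp add: r'_eq exp_minus field_simps)
  then have ln_Kr': "ln (K / r') = y + c * x"
    using r K by (simp only: ln_mult exp_gt_zero divide_pos_pos ln_exp y_def) simp
  then show "ln (K / r') \<ge> ln (K / r)"
    using c_pos x_pos by (simp add: y_def)
  define x' where "x' = ln (y + c * x)"
  have "x \<le> x'"
    using c_pos x_pos y_gt unfolding x'_def x_def by (intro ln_mono) auto
  moreover have "x' \<le> x * (1 + c / y)"
    using ln_add_ln_le[of y c] y_gt c_pos by (simp add: x_def x'_def)
  ultimately have q: "x' / x \<ge> 1" and "\<alpha> * (x' / x - 1) \<le> \<theta> / y"
    using x_pos y_gt \<alpha> by (auto simp: field_simps c_def)
  moreover have "\<theta> * exp (- x) = \<theta> / y"
    using y_gt by (simp add: x_def exp_minus divide_inverse)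
  ultimately have bound: "(x' / x) powr (-\<alpha>) \<ge> 1 - \<theta> * exp (- x)"
    using powr_neg_ge_one_minus \<alpha> by presburger
  have "ln (K / r') > 1"
    using ln_Kr' y_gt mult_pos_pos[OF c_pos x_pos] by linarith
  then have "W r' = (1 / \<theta>) * x' powr (-\<alpha>)"
    using \<theta> ln_Kr' by (simp add: W_def loglog_modulus_eq_powr x'_def)
  moreover have "W r = (1 / \<theta>) * x powr (-\<alpha>)"
    using \<theta> ln_Kr by (simp add: W_def loglog_modulus_eq_powr x_def y_def)
  ultimately have W_r': "W r' = W r * (x' / x) powr (-\<alpha>)"
    using x_pos q by (simp add: powr_divide)
  have W_nonneg: "W r \<ge> 0"
    using \<theta> by (simp add: W_def loglog_modulus_def)
  show "W r' \<ge> W r * (1 - \<theta> * exp (- ((\<theta> * W r) powr (-1 / \<alpha>))))"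
    unfolding Wx using bound W_nonneg by (simp add: W_r' mult_left_mono)
  have "\<theta> * exp (- x) \<le> 1/2"
  proof -
    have "exp (- x) \<le> 1"
      using x_pos by simp
    then show ?thesis
      using \<theta> mult_left_mono[of "exp (- x)" 1 \<theta>] by linarith
  qed
  then show "W r \<le> 2 * W r'"
    using bound W_nonneg mult_left_mono[of "1/2" "(x' / x) powr (-\<alpha>)" "W r"]
    by (simp add: W_r')
qed

lemma ln_lambda0: "ln (lambda0 \<theta> \<alpha>) = exp (\<theta> powr (-1 / \<alpha>))"
  by (simp add: lambda0_def)

lemma omega_at_R0:
  assumes "0 < \<alpha>" and "0 < \<theta>" and "R0 > 0"
  shows "omega \<theta> \<alpha> R0 R0 = 1"
  using assms by (simp add: omega_def ln_lambda0 powr_divide powr_powr powr_minus_divide)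

lemma radii_step:
  assumes "0 < \<alpha>" and "0 < \<theta>" "\<theta> < 1/2" and "R0 > 0"
    and "radii \<theta> \<alpha> R0 j > 0" and "ln (lambda0 \<theta> \<alpha> * R0 / radii \<theta> \<alpha> R0 j) > 1"
  defines "\<omega> \<equiv> omega \<theta> \<alpha> R0" and "R \<equiv> radii \<theta> \<alpha> R0"
  shows "R (Suc j) > 0" and "ln (lambda0 \<theta> \<alpha> * R0 / R (Suc j)) \<ge> ln (lambda0 \<theta> \<alpha> * R0 / R j)"
    and "\<omega> (R (Suc j)) \<ge> \<omega> (R j) * (1 - \<theta> * exp (- ((\<theta> * \<omega> (R j)) powr (-1 / \<alpha>))))"
    and "\<omega> (R j) \<le> 2 * \<omega> (R (Suc j))"
  using loglog_modulus_step[of \<alpha> \<theta> "R j" "lambda0 \<theta> \<alpha> * R0"] assms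
  by (simp_all add: R_def \<omega>_def omega_eq_loglog_modulus lambda0_def)

lemma radii_pos_and_ln_gt_one:
  assumes "0 < \<alpha>" and "0 < \<theta>" "\<theta> < 1/2" and "R0 > 0"
  shows "radii \<theta> \<alpha> R0 j > 0 \<and> ln (lambda0 \<theta> \<alpha> * R0 / radii \<theta> \<alpha> R0 j) > 1"
proof (induction j)
  case 0
  then show ?case
    using assms by (simp add: ln_lambda0)
next
  case (Suc j)
  then show ?case
    using radii_step(1,2)[OF assms, of j] by linarith
qed

theorem claim4p2:
  fixes p R0 \<alpha> \<theta> :: real and n :: nat
  assumes "p \<ge> 2" and "n \<ge> 2"
    and "R0 > 0"
    and "0 < \<alpha>" and "\<alpha> < 1 / (conj_exp p * qbar p n)"
    and "0 < \<theta>" and "\<theta> < 1/2"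
  shows "omega \<theta> \<alpha> R0 R0 = 1 \<and>
    (\<forall>j. omega \<theta> \<alpha> R0 (radii \<theta> \<alpha> R0 (Suc j)) \<ge>
          omega \<theta> \<alpha> R0 (radii \<theta> \<alpha> R0 j) *
          (1 - \<theta> * exp (- ((\<theta> * omega \<theta> \<alpha> R0 (radii \<theta> \<alpha> R0 j)) powr (-1 / \<alpha>))))
        \<and> omega \<theta> \<alpha> R0 (radii \<theta> \<alpha> R0 j) \<le> 2 * omega \<theta> \<alpha> R0 (radii \<theta> \<alpha> R0 (Suc j)))"
  using omega_at_R0[OF assms(4,6,3)] radii_step(3,4)[OF assms(4,6,7,3)]
    radii_pos_and_ln_gt_one[OF assms(4,6,7,3)]
  by blast

end
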